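(* Let $\mathcal{A}$ be a probabilistic automaton. Its extended Markov monoid $\mathcal{G}_+$, equipped with (componentwise) concatenation and with the iteration operation $(\mathbf{u},\mathbf{u}_+)\mapsto(\mathbf{u}^\sharp,\mathbf{u}_+)$ on idempotent elements, is a stabilization monoid.
   Context: Fix a finite alphabet $A$ and a probabilistic automaton $\mathcal{A}=(Q,q_0,\Delta,F)$, $\Delta:Q\times A\to\mathcal{D}(Q)$. A limit-word is a map $\mathbf{u}:Q\times Q\to\{0,1\}$ such that every $s$ has some $t$ with $\mathbf{u}(s,t)=1$. Concatenation: $(\mathbf{u}\cdot\mathbf{v})(s,t)=1$ iff there is $q$ with $\mathbf{u}(s,q)=\mathbf{v}(q,t)=1$. $\mathbf{u}$ is idempotent if $\mathbf{u}\cdot\mathbf{u}=\mathbf{u}$; for idempotent $\mathbf{u}$, $s$ is $\mathbf{u}$-recurrent if for all $t$, $\mathbf{u}(s,t)=1\Rightarrow\mathbf{u}(t,s)=1$, and $\mathbf{u}^\sharp(s,t)=1$ iff $\mathbf{u}(s,t)=1$ and $t$ is $\mathbf{u}$-recurrent. For $a\in A$, $\mathbf{a}(s,t)=1$ iff $\Delta(s,a)(t)>0$; $\mathbf{1}$ is the identity. An extended limit-word is a pair $(\mathbf{u},\mathbf{u}_+)$ of limit-words with $\mathbf{u}(s,t)=1\Rightarrow\mathbf{u}_+(s,t)=1$ for all $s,t$. Concatenation of extended limit-words is componentwise; $(\mathbf{u},\mathbf{u}_+)$ is idempotent if both components are idempotent, and then $(\mathbf{u},\mathbf{u}_+)^\sharp=(\mathbf{u}^\sharp,\mathbf{u}_+)$.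 The extended Markov monoid is the smallest set of extended limit-words containing $\{(\mathbf{a},\mathbf{a})\mid a\in A\}\cup\{(\mathbf{1},\mathbf{1})\}$ and closed under concatenation and under iteration of idempotents. A stabilization monoid $(M,\cdot,\sharp)$ is a finite monoid $(M,\cdot)$ with an operation $\sharp:E(M)\to E(M)$, $E(M)$ the set of idempotents of $M$, such that: $(a\cdot b)^\sharp\cdot a=a\cdot(b\cdot a)^\sharp$ whenever $a\cdot b, b\cdot a\in E(M)$; $(e^\sharp)^\sharp=e^\sharp$ for $e\in E(M)$; and $e^\sharp\cdot e=e^\sharp$ for $e\in E(M)$. *)

theory Defs
  imports "HOL-Probability.Probability_Mass_Function"
begin

type_synonym 'q lword = "'q \<Rightarrow> 'q \<Rightarrow> bool"

definition is_limit_word :: "'q lword \<Rightarrow> bool" where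
  "is_limit_word u \<longleftrightarrow> (\<forall>s. \<exists>t. u s t)"

definition lw_mult :: "'q lword \<Rightarrow> 'q lword \<Rightarrow> 'q lword" where
  "lw_mult u v = (\<lambda>s t. \<exists>q. u s q \<and> v q t)"

definition lw_one :: "'q lword" where
  "lw_one = (\<lambda>s t. s = t)"

definition lw_idem :: "'q lword \<Rightarrow> bool" where
  "lw_idem u \<longleftrightarrow> lw_mult u u = u"

definition lw_recurrent :: "'q lword \<Rightarrow> 'q \<Rightarrow> bool" where
  "lw_recurrent u s \<longleftrightarrow> (\<forall>t. u s t \<longrightarrow> u t s)"

definition lw_sharp :: "'q lword \<Rightarrow> 'q lword" where
  "lw_sharp u = (\<lambda>s t. u s t \<and> lw_recurrent u t)"

definition lw_letter :: "('q \<Rightarrow> 'a \<Rightarrow> 'q pmf) \<Rightarrow> 'a \<Rightarrow> 'q lword" where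
  "lw_letter \<Delta> a = (\<lambda>s t. pmf (\<Delta> s a) t > 0)"

definition is_ext_limit_word :: "'q lword \<times> 'q lword \<Rightarrow> bool" where
  "is_ext_limit_word x \<longleftrightarrow> is_limit_word (fst x) \<and> is_limit_word (snd x)
      \<and> (\<forall>s t. fst x s t \<longrightarrow> snd x s t)"

definition ext_mult :: "'q lword \<times> 'q lword \<Rightarrow> 'q lword \<times> 'q lword \<Rightarrow> 'q lword \<times> 'q lword" where
  "ext_mult x y = (lw_mult (fst x) (fst y), lw_mult (snd x) (snd y))"

definition ext_one :: "'q lword \<times> 'q lword" where
  "ext_one = (lw_one, lw_one)"

definition ext_idem :: "'q lword \<times> 'q lword \<Rightarrow> bool" where
  "ext_idem x \<longleftrightarrow> lw_idem (fst x) \<and> lw_idem (snd x)"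

definition ext_sharp :: "'q lword \<times> 'q lword \<Rightarrow> 'q lword \<times> 'q lword" where
  "ext_sharp x = (lw_sharp (fst x), snd x)"

inductive_set ext_markov_monoid :: "('q \<Rightarrow> 'a \<Rightarrow> 'q pmf) \<Rightarrow> ('q lword \<times> 'q lword) set"
  for \<Delta> :: "'q \<Rightarrow> 'a \<Rightarrow> 'q pmf" where
  letter: "(lw_letter \<Delta> a, lw_letter \<Delta> a) \<in> ext_markov_monoid \<Delta>"
| one: "ext_one \<in> ext_markov_monoid \<Delta>"
| mult: "x \<in> ext_markov_monoid \<Delta> \<Longrightarrow> y \<in> ext_markov_monoid \<Delta> \<Longrightarrow> ext_mult x y \<in> ext_markov_monoid \<Delta>"
| sharp: "x \<in> ext_markov_monoid \<Delta> \<Longrightarrow> ext_idem x \<Longrightarrow> ext_sharp x \<in> ext_markov_monoid \<Delta>"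

definition stabilization_monoid :: "'m set \<Rightarrow> ('m \<Rightarrow> 'm \<Rightarrow> 'm) \<Rightarrow> 'm \<Rightarrow> ('m \<Rightarrow> 'm) \<Rightarrow> bool" where
  "stabilization_monoid M mul unit sharp \<longleftrightarrow>
     finite M \<and> unit \<in> M \<and>
     (\<forall>a\<in>M. \<forall>b\<in>M. mul a b \<in> M) \<and>
     (\<forall>a\<in>M. \<forall>b\<in>M. \<forall>c\<in>M. mul (mul a b) c = mul a (mul b c)) \<and>
     (\<forall>a\<in>M. mul unit a = a \<and> mul a unit = a) \<and>
     (\<forall>e\<in>M. mul e e = e \<longrightarrow> sharp e \<in> M \<and> mul (sharp e) (sharp e) = sharp e) \<and>
     (\<forall>a\<in>M. \<forall>b\<in>M. mul (mul a b) (mul a b) = mul a b \<longrightarrow>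
         mul (mul b a) (mul b a) = mul b a \<longrightarrow>
         mul (sharp (mul a b)) a = mul a (sharp (mul b a))) \<and>
     (\<forall>e\<in>M. mul e e = e \<longrightarrow> sharp (sharp e) = sharp e) \<and>
     (\<forall>e\<in>M. mul e e = e \<longrightarrow> mul (sharp e) e = sharp e)"

end

theory Submission
  imports Defs
begin

text \<open>An idempotent limit-word is a transitive relation on the finite state space, so every
  state reaches a recurrent state (a maximal one in the induced preorder); hence iteration
  yields limit-words again. The key step is that recurrence transfers along u between uv and vu: if q is
  uv-recurrent and u q t, then t is vu-recurrent. Applied to (u, v) and to (v, u), this gives
  both inclusions of (uv)^# u = u (vu)^#. The second component is left unchanged by iteration,
  so there the axioms hold trivially.\<close>

lemma lw_mult_assoc: "lw_mult (lw_mult u v) w = lw_mult u (lw_mult v w)"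
  unfolding lw_mult_def by (auto intro!: ext)

lemma lw_mult_one_left: "lw_mult lw_one u = u"
  and lw_mult_one_right: "lw_mult u lw_one = u"
  unfolding lw_mult_def lw_one_def by (auto intro!: ext)

lemma lw_idem_trans:
  assumes "lw_idem u" "u x y" "u y z"
  shows "u x z"
proof -
  have "lw_mult u u x z" using assms(2,3) unfolding lw_mult_def by blast
  with \<open>lw_idem u\<close> show ?thesis unfolding lw_idem_def by simp
qed

lemma is_limit_word_letter: "is_limit_word (lw_letter \<Delta> a)"
  unfolding is_limit_word_def lw_letter_def
  using set_pmf_not_empty by (fastforce simp: set_pmf_eq')

lemma is_limit_word_one: "is_limit_word lw_one"
  unfolding is_limit_word_def lw_one_def by blast

lemma is_limit_word_mult: "is_limit_word u \<Longrightarrow> is_limit_word v \<Longrightarrow> is_limit_word (lw_mult u v)"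
  unfolding is_limit_word_def lw_mult_def by blast

lemma lw_recurrent_refl:
  assumes "lw_idem u" "is_limit_word u" "lw_recurrent u t"
  shows "u t t"
proof -
  obtain r where "u t r" using \<open>is_limit_word u\<close> unfolding is_limit_word_def by blast
  with \<open>lw_recurrent u t\<close> have "u r t" unfolding lw_recurrent_def by blast
  with \<open>u t r\<close> show ?thesis using lw_idem_trans[OF \<open>lw_idem u\<close>] by blast
qed

lemma lw_idem_ex_recurrent:
  fixes u :: "'q::finite lword"
  assumes idem: "lw_idem u" and "u s t\<^sub>0"
  shows "\<exists>t. u s t \<and> lw_recurrent u t"
proof -
  note u_trans = lw_idem_trans[OF idem]
  define strictly_below where "strictly_below = {(r, t). u t r \<and> \<not> u r t}"
  have "trans strictly_below"
    unfolding strictly_below_def trans_def by (blast intro: u_trans)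
  moreover have "irrefl strictly_below"
    unfolding strictly_below_def irrefl_def by blast
  ultimately have "wf strictly_below"
    by (simp add: finite_acyclic_wf acyclic_irrefl trancl_id)
  moreover have "t\<^sub>0 \<in> {r. u s r}" using \<open>u s t\<^sub>0\<close> by simp
  ultimately obtain t where "u s t" and minimal: "\<And>r. (r, t) \<in> strictly_below \<Longrightarrow> \<not> u s r"
    by (rule wfE_min) auto
  have "lw_recurrent u t"
    unfolding lw_recurrent_def
  proof (intro allI impI)
    fix r assume "u t r"
    with \<open>u s t\<close> have "u s r" by (rule u_trans)
    with minimal \<open>u t r\<close> show "u r t" unfolding strictly_below_def by blast
  qed
  with \<open>u s t\<close> show ?thesis by blast
qed

lemma is_limit_word_sharp:
  fixes u :: "'q::finite lword"
  assumes "lw_idem u" "is_limit_word u"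
  shows "is_limit_word (lw_sharp u)"
  unfolding is_limit_word_def lw_sharp_def
proof
  fix s
  obtain t\<^sub>0 where "u s t\<^sub>0" using \<open>is_limit_word u\<close> unfolding is_limit_word_def by blast
  then show "\<exists>t. u s t \<and> lw_recurrent u t" by (rule lw_idem_ex_recurrent[OF \<open>lw_idem u\<close>])
qed

lemma lw_sharp_sharp: "lw_sharp (lw_sharp u) = lw_sharp u"
  unfolding lw_sharp_def lw_recurrent_def by (auto intro!: ext)

lemma lw_sharp_mult_self:
  assumes idem: "lw_idem u" and "is_limit_word u"
  shows "lw_mult (lw_sharp u) u = lw_sharp u"
proof (intro ext iffI)
  note u_trans = lw_idem_trans[OF idem]
  fix s t
  assume "lw_mult (lw_sharp u) u s t"
  then obtain q where "u s q" "lw_recurrent u q" "u q t"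
    unfolding lw_mult_def lw_sharp_def by blast
  have "lw_recurrent u t"
    unfolding lw_recurrent_def
  proof (intro allI impI)
    fix r assume "u t r"
    with \<open>u q t\<close> have "u q r" by (rule u_trans)
    with \<open>lw_recurrent u q\<close> have "u r q" unfolding lw_recurrent_def by blast
    from this \<open>u q t\<close> show "u r t" by (rule u_trans)
  qed
  moreover have "u s t" using \<open>u s q\<close> \<open>u q t\<close> by (rule u_trans)
  ultimately show "lw_sharp u s t" unfolding lw_sharp_def by blast
next
  fix s t
  assume "lw_sharp u s t"
  moreover have "u t t" if "lw_recurrent u t"
    using lw_recurrent_refl[OF assms that] .
  ultimately show "lw_mult (lw_sharp u) u s t"
    unfolding lw_mult_def lw_sharp_def by blast
qed

lemma lw_idem_sharp:
  assumes "lw_idem u" "is_limit_word u"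
  shows "lw_idem (lw_sharp u)"
  unfolding lw_idem_def
proof (intro ext iffI)
  fix s t
  assume "lw_mult (lw_sharp u) (lw_sharp u) s t"
  then have "lw_mult (lw_sharp u) u s t" and "lw_recurrent u t"
    unfolding lw_mult_def lw_sharp_def by blast+
  then show "lw_sharp u s t"
    unfolding lw_sharp_mult_self[OF assms] by blast
next
  fix s t
  assume "lw_sharp u s t"
  moreover have "u t t" if "lw_recurrent u t"
    using lw_recurrent_refl[OF assms that] .
  ultimately show "lw_mult (lw_sharp u) (lw_sharp u) s t"
    unfolding lw_mult_def lw_sharp_def by blast
qed

lemma lw_recurrent_transfer:
  assumes uv: "lw_idem (lw_mult u v)" and vu: "lw_idem (lw_mult v u)"
    and "is_limit_word v"
    and rec: "lw_recurrent (lw_mult u v) q" and "u q t"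
  shows "lw_recurrent (lw_mult v u) t"
  unfolding lw_recurrent_def
proof (intro allI impI)
  fix r assume "lw_mult v u t r"
  then obtain x where "v t x" "u x r" unfolding lw_mult_def by blast
  obtain z where "v r z" using \<open>is_limit_word v\<close> unfolding is_limit_word_def by blast
  have "lw_mult u v q x" "lw_mult u v x z"
    using \<open>u q t\<close> \<open>v t x\<close> \<open>u x r\<close> \<open>v r z\<close> unfolding lw_mult_def by blast+
  then have "lw_mult u v z q"
    using rec lw_idem_trans[OF uv] unfolding lw_recurrent_def by blast
  then obtain w where "u z w" "v w q" unfolding lw_mult_def by blast
  then have "lw_mult v u r w" "lw_mult v u w t"
    using \<open>v r z\<close> \<open>u q t\<close> unfolding lw_mult_def by blast+
  then show "lw_mult v u r t" using lw_idem_trans[OF vu] by blast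
qed

lemma lw_sharp_conjugate:
  assumes uv: "lw_idem (lw_mult u v)" and vu: "lw_idem (lw_mult v u)"
    and u: "is_limit_word u" and v: "is_limit_word v"
  shows "lw_mult (lw_sharp (lw_mult u v)) u = lw_mult u (lw_sharp (lw_mult v u))"
proof (intro ext iffI)
  fix s t
  assume "lw_mult (lw_sharp (lw_mult u v)) u s t"
  then obtain p q where "u s p" "v p q" "u q t" and rec: "lw_recurrent (lw_mult u v) q"
    unfolding lw_mult_def lw_sharp_def by blast
  moreover have "lw_recurrent (lw_mult v u) t"
    using lw_recurrent_transfer[OF uv vu v rec \<open>u q t\<close>] .
  ultimately show "lw_mult u (lw_sharp (lw_mult v u)) s t"
    unfolding lw_mult_def lw_sharp_def by blast
next
  fix s t
  assume "lw_mult u (lw_sharp (lw_mult v u)) s t"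
  then obtain q p where "u s q" "v q p" "u p t" and rec: "lw_recurrent (lw_mult v u) t"
    unfolding lw_mult_def lw_sharp_def by blast
  have "lw_mult v u t t"
    using lw_recurrent_refl[OF vu is_limit_word_mult[OF v u] rec] .
  then obtain a where "v t a" "u a t" unfolding lw_mult_def by blast
  have "lw_recurrent (lw_mult u v) a"
    using lw_recurrent_transfer[OF vu uv u rec \<open>v t a\<close>] .
  moreover have "lw_mult u v s a"
    using \<open>u s q\<close> \<open>v q p\<close> \<open>u p t\<close> \<open>v t a\<close> lw_idem_trans[OF uv]
    unfolding lw_mult_def by blast
  ultimately show "lw_mult (lw_sharp (lw_mult u v)) u s t"
    using \<open>u a t\<close> unfolding lw_mult_def lw_sharp_def by blast
qed

lemma ext_idem_iff_mult_self: "ext_idem x \<longleftrightarrow> ext_mult x x = x"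
  by (cases x) (simp add: ext_idem_def ext_mult_def lw_idem_def)

lemma ext_markov_monoid_fst_limit_word:
  fixes \<Delta> :: "'q::finite \<Rightarrow> 'a \<Rightarrow> 'q pmf"
  shows "x \<in> ext_markov_monoid \<Delta> \<Longrightarrow> is_limit_word (fst x)"
proof (induction rule: ext_markov_monoid.induct)
  case (sharp x)
  then show ?case
    by (simp add: ext_sharp_def ext_idem_def is_limit_word_sharp)
qed (simp_all add: is_limit_word_letter is_limit_word_one is_limit_word_mult
                   ext_one_def ext_mult_def)

theorem lemma3p12:
  fixes \<Delta> :: "'q::finite \<Rightarrow> 'a::finite \<Rightarrow> 'q pmf"
  shows "stabilization_monoid (ext_markov_monoid \<Delta>) ext_mult ext_one ext_sharp"
  unfolding stabilization_monoid_def ext_idem_iff_mult_self[symmetric]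
proof (intro conjI ballI impI)
  fix a b e assume a: "a \<in> ext_markov_monoid \<Delta>" and b: "b \<in> ext_markov_monoid \<Delta>"
    and e: "e \<in> ext_markov_monoid \<Delta>"
  show "ext_mult a b \<in> ext_markov_monoid \<Delta>" using a b by (rule ext_markov_monoid.mult)
  show "ext_mult ext_one a = a" "ext_mult a ext_one = a"
    by (simp_all add: ext_mult_def ext_one_def lw_mult_one_left lw_mult_one_right)
  show "ext_mult (ext_mult a b) e = ext_mult a (ext_mult b e)"
    by (simp add: ext_mult_def lw_mult_assoc)
  assume "ext_idem e"
  then have idem: "lw_idem (fst e)" "lw_idem (snd e)" unfolding ext_idem_def by simp_all
  note fst_e = idem(1) ext_markov_monoid_fst_limit_word[OF e]
  show "ext_sharp e \<in> ext_markov_monoid \<Delta>" using e \<open>ext_idem e\<close> by (rule ext_markov_monoid.sharp)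
  show "ext_idem (ext_sharp e)"
    using lw_idem_sharp[OF fst_e] idem(2) by (simp add: ext_idem_def ext_sharp_def)
  show "ext_sharp (ext_sharp e) = ext_sharp e" by (simp add: ext_sharp_def lw_sharp_sharp)
  show "ext_mult (ext_sharp e) e = ext_sharp e"
    using lw_sharp_mult_self[OF fst_e] idem(2)
    by (simp add: ext_sharp_def ext_mult_def lw_idem_def)
next
  fix a b assume a: "a \<in> ext_markov_monoid \<Delta>" and b: "b \<in> ext_markov_monoid \<Delta>"
    and "ext_idem (ext_mult a b)" "ext_idem (ext_mult b a)"
  then have "lw_idem (lw_mult (fst a) (fst b))" "lw_idem (lw_mult (fst b) (fst a))"
    by (simp_all add: ext_idem_def ext_mult_def)
  from lw_sharp_conjugate[OF this ext_markov_monoid_fst_limit_word[OF a]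
      ext_markov_monoid_fst_limit_word[OF b]]
  show "ext_mult (ext_sharp (ext_mult a b)) a = ext_mult a (ext_sharp (ext_mult b a))"
    by (simp add: ext_mult_def ext_sharp_def lw_mult_assoc)
qed (simp_all add: ext_markov_monoid.one)

end
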